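(* Let $\mu=\prod_{n=1}^{\infty}\nu_n$ be a centered probability measure on $[0,1]^{\mathbb{N}}$ (in the sense defined in the context). Then $\mu(\mathcal{C}_I)=0$; that is, for $\mu$-almost every sequence $(p_i)_{i=1}^\infty$ the Condorcet Jury Property fails.
   Context: For a sequence $(p_i)_{i=1}^\infty\in[0,1]^{\mathbb{N}}$ let $X_1,X_2,\dots$ be independent random variables with values in $\{0,1\}$ and $\mathbb{P}(X_i=1)=p_i$. The sequence satisfies the Condorcet Jury Property (CJP) if $\lim_{n\to\infty,\ n\text{ odd}}\mathbb{P}\left(\sum_{i=1}^n X_i>\frac n2\right)=1$. $\mathcal{C}_I\subset[0,1]^{\mathbb{N}}$ denotes the set of sequences satisfying the CJP. All measures are Borel probability measures; $\nu\ll\nu'$ denotes absolute continuity. Hellinger integral: for probability measures $\nu,\nu'$ on $[0,1]$, $H(\nu,\nu')=\int_{[0,1]}\sqrt{\frac{d\nu}{d\tau}\frac{d\nu'}{d\tau}}\,d\tau$ for any measure $\tau$ with $\nu,\nu'\ll\tau$. Class $\mathcal{D}$: a function $d$ on pairs of probability measures on $[0,1]$ which is either a divergence ($d(\nu,\nu')\ge 0$ with equality iff $\nu=\nu'$) or a distance (a metric) belongs to $\mathcal{D}$ if there is a constant $C>0$ with $1-H(\nu,\nu')\le C\, d(\nu,\nu')$ for all $\nu,\nu'$. (E.g. total variation distance and Kullback–Leibler divergence belong to $\mathcal{D}$.) Centered measure: a product probability measure $\mu=\prod_{n=1}^\infty\nu_n$ on $[0,1]^{\mathbb{N}}$ is centered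 if there is a probability measure $\nu_0$ on $[0,1]$ such that $\nu_n\ll\nu_0$ for all $n\ge1$, $\int_{[0,1]}x\,d\nu_0(x)=\frac12$, and $\sum_{n=1}^\infty d(\nu_n,\nu_0)<\infty$ for some $d\in\mathcal{D}$. *)

theory Defs
  imports "HOL-Probability.Probability"
begin

definition prob_on_unit :: "real measure \<Rightarrow> bool" where
  "prob_on_unit \<nu> \<longleftrightarrow> prob_space \<nu> \<and> space \<nu> = {0..1} \<and>
     sets \<nu> = sets (restrict_space borel {0..1::real})"

text \<open>The sum measure nu + nu', which dominates both nu and nu'.\<close>
definition sum_meas :: "real measure \<Rightarrow> real measure \<Rightarrow> real measure" where
  "sum_meas \<nu> \<nu>' = measure_of (space \<nu>) (sets \<nu>) (\<lambda>A. emeasure \<nu> A + emeasure \<nu>' A)"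

text \<open>Hellinger integral H(nu,nu'), computed with the dominating measure tau = nu + nu'
  (the value does not depend on the choice of tau).\<close>
definition hellinger :: "real measure \<Rightarrow> real measure \<Rightarrow> real" where
  "hellinger \<nu> \<nu>' = (let \<tau> = sum_meas \<nu> \<nu>' in
     (\<integral>x. sqrt (enn2real (RN_deriv \<tau> \<nu> x) * enn2real (RN_deriv \<tau> \<nu>' x)) \<partial>\<tau>))"

definition is_divergence :: "(real measure \<Rightarrow> real measure \<Rightarrow> ennreal) \<Rightarrow> bool" where
  "is_divergence d \<longleftrightarrow>
     (\<forall>\<nu> \<nu>'. prob_on_unit \<nu> \<longrightarrow> prob_on_unit \<nu>' \<longrightarrow> (d \<nu> \<nu>' = 0 \<longleftrightarrow> \<nu> = \<nu>'))"

definition is_distance :: "(real measure \<Rightarrow> real measure \<Rightarrow> ennreal) \<Rightarrow> bool" where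
  "is_distance d \<longleftrightarrow>
     (\<forall>\<nu> \<nu>'. prob_on_unit \<nu> \<longrightarrow> prob_on_unit \<nu>' \<longrightarrow>
        d \<nu> \<nu>' < \<top> \<and> (d \<nu> \<nu>' = 0 \<longleftrightarrow> \<nu> = \<nu>') \<and> d \<nu> \<nu>' = d \<nu>' \<nu>) \<and>
     (\<forall>\<nu> \<nu>' \<nu>''. prob_on_unit \<nu> \<longrightarrow> prob_on_unit \<nu>' \<longrightarrow> prob_on_unit \<nu>'' \<longrightarrow>
        d \<nu> \<nu>'' \<le> d \<nu> \<nu>' + d \<nu>' \<nu>'')"

definition class_D :: "(real measure \<Rightarrow> real measure \<Rightarrow> ennreal) set" where
  "class_D = {d. (is_divergence d \<or> is_distance d) \<and>
     (\<exists>C::real. C > 0 \<and> (\<forall>\<nu> \<nu>'. prob_on_unit \<nu> \<longrightarrow> prob_on_unit \<nu>' \<longrightarrow>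
        ennreal (1 - hellinger \<nu> \<nu>') \<le> ennreal C * d \<nu> \<nu>'))}"

text \<open>Centered product measure prod_n nu_n (index n = 0,1,2,... stands for 1,2,3,...).\<close>
definition centered :: "(nat \<Rightarrow> real measure) \<Rightarrow> bool" where
  "centered \<nu> \<longleftrightarrow> (\<forall>n. prob_on_unit (\<nu> n)) \<and>
     (\<exists>\<nu>0. prob_on_unit \<nu>0 \<and> (\<forall>n. absolutely_continuous \<nu>0 (\<nu> n)) \<and>
        (\<integral>x. x \<partial>\<nu>0) = 1/2 \<and>
        (\<exists>d \<in> class_D. (\<Sum>n. d (\<nu> n) \<nu>0) < \<top>))"

definition maj_prob :: "(nat \<Rightarrow> real) \<Rightarrow> nat \<Rightarrow> real" where
  "maj_prob p n = measure_pmf.prob (Pi_pmf {..<n} False (\<lambda>i. bernoulli_pmf (p i)))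
      {X. real (card {i \<in> {..<n}. X i}) > real n / 2}"

definition CJP_set :: "(nat \<Rightarrow> real) set" where
  "CJP_set = {p. (\<forall>i. p i \<in> {0..1}) \<and> (\<lambda>k. maj_prob p (2*k+1)) \<longlonglongrightarrow> 1}"

end

(*
  Let q_i be the mean of nu_i. Because the success probability of a majority vote is affine
  in each competence, averaging over independent competences replaces them by their means,
  also after conditioning on the first m competences. The Hellinger bound
  (q_i - 1/2)^2 <= 2 (1 - H(nu_i, nu_0)) and centredness give sum_i (q_i - 1/2)^2 < infinity,
  hence sum_{i<n} |q_i - 1/2| = o(sqrt n). A majority vote with so small a drift behaves
  like a vote of fair coins, and anti-concentration of the binomial distribution bounds its
  success probability by 3/4 for large n. Hence the Condorcet set A satisfies
  mu(A Int C) <= 3/4 mu(C) for every cylinder set C, and approximating A by cylinder sets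
  gives mu(A) = 0.
*)

theory Submission
  imports Defs "HOL-Library.Landau_Symbols"
begin

section \<open>Tail probabilities of sums of Bernoulli variables\<close>

text \<open>\<open>tail_prob p a k t\<close> is the probability that more than \<open>t\<close> of the independent votes
  \<open>a, \<dots>, a + k - 1\<close> are correct, vote \<open>i\<close> being correct with probability \<open>p i\<close>.\<close>

fun tail_prob :: "(nat \<Rightarrow> real) \<Rightarrow> nat \<Rightarrow> nat \<Rightarrow> real \<Rightarrow> real" where
  "tail_prob p a 0 t = (if t < 0 then 1 else 0)"
| "tail_prob p a (Suc k) t = p (a + k) * tail_prob p a k (t - 1) + (1 - p (a + k)) * tail_prob p a k t"

lemma tail_prob_in_unit:
  assumes "\<And>i. a \<le> i \<Longrightarrow> i < a + k \<Longrightarrow> p i \<in> {0..1}"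
  shows "tail_prob p a k t \<in> {0..1}"
  using assms
proof (induction k arbitrary: t)
  case 0
  then show ?case by simp
next
  case (Suc k)
  have "p (a + k) \<in> {0..1}" "\<And>s. tail_prob p a k s \<in> {0..1}"
    using Suc by auto
  then show ?case
    using convexD[OF convex_real_interval(5), of "tail_prob p a k (t - 1)" 0 1
        "tail_prob p a k t" "p (a + k)" "1 - p (a + k)"]
    by simp
qed

lemma tail_prob_antimono:
  assumes "\<And>i. p i \<in> {0..1}" and "t \<le> t'"
  shows "tail_prob p a k t' \<le> tail_prob p a k t"
  using assms(2)
proof (induction k arbitrary: t t')
  case 0
  then show ?case by simp
next
  case (Suc k)
  have "0 \<le> p (a + k)" "p (a + k) \<le> 1"
    using assms(1)[of "a + k"] by auto
  moreover have "tail_prob p a k (t' - 1) \<le> tail_prob p a k (t - 1)"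
    "tail_prob p a k t' \<le> tail_prob p a k t"
    using Suc by auto
  ultimately show ?case
    by (simp add: add_mono mult_left_mono)
qed

lemma tail_prob_eq_0:
  assumes "real k \<le> t"
  shows "tail_prob p a k t = 0"
  using assms by (induction k arbitrary: t) auto

lemma tail_prob_cong:
  assumes "\<And>i. a \<le> i \<Longrightarrow> i < a + k \<Longrightarrow> p i = p' i"
  shows "tail_prob p a k t = tail_prob p' a k t"
  using assms by (induction k arbitrary: t) auto

lemma tail_prob_drop_prefix:
  assumes p: "\<And>i. p i \<in> {0..1}"
  shows "tail_prob p 0 (m + k) t \<le> tail_prob p m k (t - real m)"
proof (induction k arbitrary: t)
  case 0
  show ?case
  proof (cases "t < real m")
    case True
    then show ?thesis
      using tail_prob_in_unit[of 0 m p t] p by simp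
  next
    case False
    then show ?thesis
      using tail_prob_eq_0[of m t p 0] by simp
  qed
next
  case (Suc k)
  have "0 \<le> p (m + k)" "p (m + k) \<le> 1"
    using p[of "m + k"] by auto
  then have "tail_prob p 0 (m + Suc k) t
      \<le> p (m + k) * tail_prob p m k (t - 1 - real m) + (1 - p (m + k)) * tail_prob p m k (t - real m)"
    using Suc[of "t - 1"] Suc[of t] by (auto intro!: add_mono mult_left_mono)
  then show ?case
    by (simp add: algebra_simps)
qed

text \<open>
  A vote with competence \<open>q \<le> (1 + e)/2\<close> is dominated by the maximum of a fair coin and an
  independent \<open>e\<close>-coin. So the votes exceed \<open>t\<close> only if the fair coins exceed \<open>t - L\<close> or the
  \<open>e\<close>-coins exceed \<open>L\<close>.\<close>

lemma tail_prob_le_fair_plus_bonus: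
  assumes q: "\<And>i. q i \<in> {0..1}" and e: "\<And>i. e i \<in> {0..1}"
    and qe: "\<And>i. q i \<le> (1 + e i) / 2"
  shows "tail_prob q a k t \<le> tail_prob (\<lambda>_. 1/2) a k (t - L) + tail_prob e a k L"
proof (induction k arbitrary: t L)
  case 0
  then show ?case by auto
next
  case (Suc k)
  let ?q = "q (a + k)" and ?e = "e (a + k)"
  let ?B = "tail_prob (\<lambda>_. 1/2) a k" and ?E = "tail_prob e a k" and ?Q = "tail_prob q a k"
  have e_unit: "0 \<le> ?e" "?e \<le> 1"
    using e[of "a + k"] by auto
  have "?Q t \<le> ?Q (t - 1)"
    using tail_prob_antimono[OF q, of "t - 1" t] by simp
  have "?q * ?Q (t - 1) + (1 - ?q) * ?Q t = ?Q t + ?q * (?Q (t - 1) - ?Q t)"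
    by (simp add: algebra_simps)
  also have "\<dots> \<le> ?Q t + ((1 + ?e) / 2) * (?Q (t - 1) - ?Q t)"
    using qe[of "a + k"] \<open>?Q t \<le> ?Q (t - 1)\<close> by (intro add_left_mono mult_right_mono) auto
  also have "\<dots> = ?e * ?Q (t - 1) + ((1 - ?e) / 2) * ?Q (t - 1) + ((1 - ?e) / 2) * ?Q t"
    by (simp add: field_simps)
  also have "\<dots> \<le> ?e * (?B (t - 1 - (L - 1)) + ?E (L - 1)) + ((1 - ?e) / 2) * (?B (t - 1 - L) + ?E L)
      + ((1 - ?e) / 2) * (?B (t - L) + ?E L)"
    using Suc[of "t - 1" "L - 1"] Suc[of "t - 1" L] Suc[of t L] e_unit
    by (intro add_mono mult_left_mono) auto
  also have "\<dots> = ((1 + ?e) / 2) * ?B (t - L) + ((1 - ?e) / 2) * ?B (t - L - 1)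
      + (?e * ?E (L - 1) + (1 - ?e) * ?E L)"
    by (simp add: field_simps)
  also have "\<dots> \<le> (1/2) * ?B (t - L) + (1/2) * ?B (t - L - 1) + (?e * ?E (L - 1) + (1 - ?e) * ?E L)"
  proof -
    have "?B (t - L) \<le> ?B (t - L - 1)"
      by (rule tail_prob_antimono) auto
    then show ?thesis
      using mult_left_mono[of "?B (t - L)" "?B (t - L - 1)" ?e] e_unit
      by (simp add: field_simps)
  qed
  also have "\<dots> = tail_prob (\<lambda>_. 1/2) a (Suc k) (t - L) + tail_prob e a (Suc k) L"
    by (simp add: algebra_simps)
  finally show ?case
    by simp
qed

lemma tail_prob_markov:
  assumes e: "\<And>i. e i \<in> {0..1}" and "0 \<le> L"
  shows "L * tail_prob e a k L \<le> (\<Sum>i<k. e (a + i))"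
  using assms(2)
proof (induction k arbitrary: L)
  case 0
  then show ?case by simp
next
  case (Suc k)
  let ?e = "e (a + k)" and ?s = "\<Sum>i<k. e (a + i)"
  have e_unit: "0 \<le> ?e" "?e \<le> 1"
    using e[of "a + k"] by auto
  have s: "0 \<le> ?s"
    using e by (auto intro: sum_nonneg)
  have E: "tail_prob e a k s \<in> {0..1}" for s
    using e by (rule tail_prob_in_unit)
  have "L * tail_prob e a k (L - 1) \<le> 1 + ?s"
  proof (cases "L < 1")
    case True
    then show ?thesis
      using E[of "L - 1"] Suc.prems s mult_mono[of L 1 "tail_prob e a k (L - 1)" 1] by auto
  next
    case False
    then show ?thesis
      using Suc.IH[of "L - 1"] E[of "L - 1"] by (simp add: algebra_simps)
  qed
  then have "?e * (L * tail_prob e a k (L - 1)) \<le> ?e * (1 + ?s)"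
    using e_unit by (intro mult_left_mono) auto
  moreover have "(1 - ?e) * (L * tail_prob e a k L) \<le> (1 - ?e) * ?s"
    using Suc.IH[OF Suc.prems] e_unit by (intro mult_left_mono) auto
  moreover have "L * tail_prob e a (Suc k) L
      = ?e * (L * tail_prob e a k (L - 1)) + (1 - ?e) * (L * tail_prob e a k L)"
    by (simp add: algebra_simps)
  ultimately show ?case
    by (simp add: algebra_simps)
qed

section \<open>Majority votes\<close>

lemma prob_bernoulli_shift_gt:
  fixes D :: "nat pmf"
  assumes "u \<in> {0..1}"
  shows "measure_pmf.prob (bernoulli_pmf u \<bind> (\<lambda>b. map_pmf (\<lambda>k. of_bool b + k) D)) {j. t < real j}
       = u * measure_pmf.prob D {j. t - 1 < real j} + (1 - u) * measure_pmf.prob D {j. t < real j}"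
proof -
  let ?A = "{j::nat. t < real j}"
  have shift1: "(\<lambda>k. of_bool True + k) -` ?A = {j. t - 1 < real j}"
    and shift0: "(\<lambda>k. of_bool False + k) -` ?A = ?A"
    by auto
  have "ennreal (measure_pmf.prob (bernoulli_pmf u \<bind> (\<lambda>b. map_pmf (\<lambda>k. of_bool b + k) D)) ?A)
      = emeasure (map_pmf (\<lambda>k. of_bool True + k) D) ?A * u
        + emeasure (map_pmf (\<lambda>k. of_bool False + k) D) ?A * (1 - u)"
    using assms by (simp add: measure_pmf.emeasure_eq_measure[symmetric] nn_integral_bernoulli_pmf)
  also have "\<dots> = ennreal (measure_pmf.prob D {j. t - 1 < real j}) * ennreal u
      + ennreal (measure_pmf.prob D ?A) * ennreal (1 - u)"
    unfolding emeasure_map_pmf shift1 shift0 using assms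
    by (simp add: measure_pmf.emeasure_eq_measure)
  also have "\<dots> = ennreal (u * measure_pmf.prob D {j. t - 1 < real j} + (1 - u) * measure_pmf.prob D ?A)"
    using assms
    by (simp add: ennreal_mult'[symmetric] ennreal_plus[symmetric] mult.commute del: ennreal_plus)
  finally show ?thesis
    using assms by (subst (asm) ennreal_inj) auto
qed

definition vote_count_pmf :: "(nat \<Rightarrow> real) \<Rightarrow> nat \<Rightarrow> nat pmf" where
  "vote_count_pmf p n =
     map_pmf (\<lambda>X. card {i \<in> {..<n}. X i}) (Pi_pmf {..<n} False (\<lambda>i. bernoulli_pmf (p i)))"

lemma vote_count_pmf_Suc:
  "vote_count_pmf p (Suc n) = bernoulli_pmf (p n) \<bind> (\<lambda>b. map_pmf (\<lambda>k. of_bool b + k) (vote_count_pmf p n))"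
proof -
  have card: "card {i \<in> {..<Suc n}. (X(n := b)) i} = of_bool b + card {i \<in> {..<n}. X i}"
    for X :: "nat \<Rightarrow> bool" and b
  proof -
    have "{i \<in> {..<Suc n}. (X(n := b)) i} = {i \<in> {..<n}. X i} \<union> (if b then {n} else {})"
      by (auto simp: less_Suc_eq)
    then show ?thesis
      by (auto simp: card_insert_if)
  qed
  have "vote_count_pmf p (Suc n) = map_pmf (\<lambda>X. card {i \<in> {..<Suc n}. X i})
      (bernoulli_pmf (p n) \<bind> (\<lambda>b. Pi_pmf {..<n} False (\<lambda>i. bernoulli_pmf (p i)) \<bind> (\<lambda>X. return_pmf (X(n := b)))))"
    unfolding vote_count_pmf_def lessThan_Suc by (subst Pi_pmf_insert') auto
  also have "\<dots> = bernoulli_pmf (p n) \<bind> (\<lambda>b. map_pmf (\<lambda>k. of_bool b + k) (vote_count_pmf p n))"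
    unfolding vote_count_pmf_def
    by (simp only: map_bind_pmf map_return_pmf card) (simp add: map_pmf_def bind_assoc_pmf bind_return_pmf)
  finally show ?thesis .
qed

lemma tail_prob_eq_vote_count:
  assumes "\<And>i. p i \<in> {0..1}"
  shows "tail_prob p 0 n t = measure_pmf.prob (vote_count_pmf p n) {j. t < real j}"
proof (induction n arbitrary: t)
  case 0
  have "vote_count_pmf p 0 = return_pmf 0"
    unfolding vote_count_pmf_def by simp
  then show ?case
    by (simp add: indicator_def)
next
  case (Suc n)
  then show ?case
    unfolding vote_count_pmf_Suc prob_bernoulli_shift_gt[OF assms] by simp
qed

lemma maj_prob_eq_tail_prob:
  assumes "\<And>i. p i \<in> {0..1}"
  shows "maj_prob p n = tail_prob p 0 n (real n / 2)"
  unfolding tail_prob_eq_vote_count[OF assms] maj_prob_def vote_count_pmf_def measure_map_pmf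
  by (simp add: vimage_def)

lemma tail_prob_fair_eq_binomial:
  "tail_prob (\<lambda>_. 1/2) a k t = measure_pmf.prob (binomial_pmf k (1/2)) {j. t < real j}"
proof (induction k arbitrary: t)
  case 0
  then show ?case
    by (simp add: binomial_pmf_0 indicator_def)
next
  case (Suc k)
  have "binomial_pmf (Suc k) (1/2)
      = bernoulli_pmf (1/2) \<bind> (\<lambda>b. map_pmf (\<lambda>j. of_bool b + j) (binomial_pmf k (1/2)))"
    by (subst binomial_pmf_Suc) (auto simp: map_pmf_def of_bool_def)
  then show ?case
    using prob_bernoulli_shift_gt[where u="1/2" and t=t and D="binomial_pmf k (1/2)"] Suc by simp
qed

section \<open>Anti-concentration of the fair binomial distribution\<close>

lemma binomial_odd_central: "Suc k * ((2 * k + 1) choose k) = (2 * k + 1) * ((2 * k) choose k)"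
proof -
  have "(2 * k + 1) choose Suc k = (2 * k + 1) choose k"
    using central_binomial_odd[of "2 * k + 1"] by simp
  then show ?thesis
    using Suc_times_binomial[of k "2 * k"] by simp
qed

lemma binomial_central_Suc: "(2 * Suc k) choose Suc k = 2 * ((2 * k + 1) choose k)"
  using central_binomial_odd[of "2 * k + 1"] binomial_Suc_Suc[of "2 * k + 1" k] by simp

lemma central_binomial_sq_le: "real ((2 * k) choose k) ^ 2 * (2 * k + 1) \<le> 16 ^ k"
proof (induction k)
  case 0
  then show ?case by simp
next
  case (Suc k)
  define c where "c = real ((2 * k) choose k)"
  define d where "d = real ((2 * Suc k) choose Suc k)"
  have "real (Suc k * ((2 * Suc k) choose Suc k)) = real (2 * ((2 * k + 1) * ((2 * k) choose k)))"
    unfolding binomial_central_Suc binomial_odd_central[symmetric] by simp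
  then have rec: "(real k + 1) * d = 2 * (2 * real k + 1) * c"
    unfolding c_def d_def by (simp add: algebra_simps)
  have "(real k + 1)^2 * (d^2 * (2 * Suc k + 1)) = (2 * (2 * real k + 1) * c)^2 * (2 * real k + 3)"
    unfolding rec[symmetric] by (simp add: power2_eq_square algebra_simps)
  also have "\<dots> = (c^2 * (2 * k + 1)) * (4 * (2 * real k + 1) * (2 * real k + 3))"
    by (simp add: power2_eq_square algebra_simps)
  also have "\<dots> \<le> 16^k * (4 * (2 * real k + 1) * (2 * real k + 3))"
    using Suc.IH unfolding c_def by (intro mult_right_mono) auto
  also have "\<dots> \<le> 16^k * (16 * (real k + 1)^2)"
    by (intro mult_left_mono) (auto simp: power2_eq_square algebra_simps)
  finally have "(real k + 1)^2 * (d^2 * (2 * Suc k + 1)) \<le> (real k + 1)^2 * 16 ^ Suc k"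
    by simp
  then show ?case
    unfolding d_def by (simp del: of_nat_Suc)
qed

lemma binomial_sq_le: "real (N choose j) ^ 2 * N \<le> 4 ^ N"
proof -
  have "real (N choose j) ^ 2 * N \<le> real (N choose (N div 2)) ^ 2 * N"
    using binomial_maximum[of N j] by (intro mult_right_mono power_mono) auto
  also have "\<dots> \<le> 4 ^ N"
  proof (cases "even N")
    case True
    then obtain k where N: "N = 2 * k" by blast
    have "real ((2 * k) choose k) ^ 2 * (2 * k) \<le> real ((2 * k) choose k) ^ 2 * (2 * k + 1)"
      by (intro mult_left_mono) auto
    also have "\<dots> \<le> 16 ^ k"
      by (rule central_binomial_sq_le)
    finally show ?thesis
      unfolding N by (simp add: power_mult)
  next
    case False
    then obtain k where N: "N = 2 * k + 1" using oddE by blast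
    define d where "d = real ((2 * Suc k) choose Suc k)"
    have "real (N choose (N div 2)) ^ 2 * N = d ^ 2 * (2 * k + 1) / 4"
      unfolding N d_def binomial_central_Suc by (simp add: power2_eq_square)
    also have "\<dots> \<le> d ^ 2 * (2 * Suc k + 1) / 4"
      by (intro divide_right_mono mult_left_mono) auto
    also have "\<dots> \<le> 16 ^ Suc k / 4"
      unfolding d_def using central_binomial_sq_le[of "Suc k"] by (intro divide_right_mono) auto
    also have "\<dots> = 4 ^ N"
      unfolding N by (simp add: power_mult)
    finally show ?thesis .
  qed
  finally show ?thesis .
qed

lemma pmf_binomial_half: "pmf (binomial_pmf N (1/2)) j = real (N choose j) / 2 ^ N"
proof (cases "j \<le> N")
  case True
  then have "(1/2::real) ^ j * (1/2) ^ (N - j) = 1 / 2 ^ N"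
    by (simp add: power_add[symmetric] power_one_over)
  then show ?thesis
    by (simp add: mult.assoc)
next
  case False
  then show ?thesis
    by (simp add: binomial_eq_0)
qed

lemma pmf_binomial_half_le:
  assumes "N \<ge> 1"
  shows "pmf (binomial_pmf N (1/2)) j \<le> 1 / sqrt N"
proof -
  define x where "x = real (N choose j) / 2 ^ N"
  have "x ^ 2 * N = real (N choose j) ^ 2 * N / 4 ^ N"
    unfolding x_def by (simp add: power2_eq_square power_mult_distrib[symmetric])
  also have "\<dots> \<le> 1"
    using binomial_sq_le[of N j] by simp
  finally have "x ^ 2 \<le> 1 / N"
    using assms by (simp add: field_simps)
  then have "x \<le> 1 / sqrt N"
    using real_sqrt_le_mono[of "x ^ 2" "1 / N"] unfolding x_def by (simp add: real_sqrt_divide)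
  then show ?thesis
    unfolding x_def pmf_binomial_half .
qed

lemma card_nat_in_Ioc_le:
  fixes x K :: real
  assumes "0 \<le> K"
  shows "real (card {j::nat. x - K < real j \<and> real j \<le> x}) \<le> K + 1"
proof (cases "{j::nat. x - K < real j \<and> real j \<le> x} = {}")
  case True
  show ?thesis
    unfolding True using assms by simp
next
  case False
  define S where "S = {j::nat. x - K < real j \<and> real j \<le> x}"
  have fin: "finite S"
    by (rule finite_subset[of _ "{..nat \<lceil>x\<rceil>}"]) (auto simp: S_def le_nat_iff, linarith)
  have ne: "S \<noteq> {}"
    using False unfolding S_def .
  have "card S \<le> card {Min S..Max S}"
    using fin by (intro card_mono) auto
  moreover have "Min S \<le> Max S"
    using fin ne by simp
  ultimately have "real (card S) \<le> real (Max S) - real (Min S) + 1"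
    by (simp add: of_nat_diff)
  moreover have "real (Max S) \<le> x" "x - K < real (Min S)"
    using Max_in[OF fin ne] Min_in[OF fin ne] unfolding S_def by auto
  ultimately show ?thesis
    unfolding S_def by linarith
qed

lemma prob_binomial_half_gt_le:
  fixes K :: real
  assumes N: "N \<ge> 1" and K: "0 \<le> K"
  shows "measure_pmf.prob (binomial_pmf N (1/2)) {j. real N / 2 - K < real j} \<le> 1/2 + (K + 1) / sqrt N"
proof -
  let ?M = "binomial_pmf N (1/2)"
  define Above where "Above = {j. j \<le> N \<and> real N / 2 < real j}"
  define Below where "Below = {j. j \<le> N \<and> real j < real N / 2}"
  define Middle where "Middle = {j. j \<le> N \<and> real N / 2 - K < real j \<and> real j \<le> real N / 2}"
  have fin: "finite Above" "finite Below" "finite Middle"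
    unfolding Above_def Below_def Middle_def by auto
  have "measure_pmf.prob ?M {j. real N / 2 - K < real j}
      = measure_pmf.prob ?M ({j. real N / 2 - K < real j} \<inter> {..N})"
    using measure_Int_set_pmf[of ?M] by simp
  also have "\<dots> \<le> measure_pmf.prob ?M (Above \<union> Middle)"
    by (rule measure_pmf.finite_measure_mono) (auto simp: Above_def Middle_def)
  also have "\<dots> \<le> measure_pmf.prob ?M Above + measure_pmf.prob ?M Middle"
    by (rule measure_subadditive) auto
  also have "measure_pmf.prob ?M Above \<le> 1/2"
  proof -
    have "bij_betw (\<lambda>j. N - j) Below Above"
      by (rule bij_betw_byWitness[where f'="\<lambda>j. N - j"]) (auto simp: Above_def Below_def of_nat_diff)
    then have "(\<Sum>j\<in>Below. pmf ?M (N - j)) = (\<Sum>j\<in>Above. pmf ?M j)"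
      by (rule sum.reindex_bij_betw)
    moreover have "(\<Sum>j\<in>Below. pmf ?M (N - j)) = (\<Sum>j\<in>Below. pmf ?M j)"
      by (rule sum.cong) (auto simp: Below_def pmf_binomial_half binomial_symmetric[symmetric])
    ultimately have "measure_pmf.prob ?M Below = measure_pmf.prob ?M Above"
      using fin by (simp add: measure_measure_pmf_finite)
    moreover have "measure_pmf.prob ?M Above + measure_pmf.prob ?M Below = measure_pmf.prob ?M (Above \<union> Below)"
      by (rule measure_pmf.finite_measure_Union[symmetric]) (auto simp: Above_def Below_def)
    moreover have "measure_pmf.prob ?M (Above \<union> Below) \<le> 1"
      by (rule measure_pmf.prob_le_1)
    ultimately show ?thesis
      by linarith
  qed
  also have "measure_pmf.prob ?M Middle \<le> (K + 1) / sqrt N"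
  proof -
    have "measure_pmf.prob ?M Middle \<le> real (card Middle) * (1 / sqrt N)"
      using fin sum_bounded_above[of Middle "pmf ?M" "1 / sqrt N"] pmf_binomial_half_le[OF N]
      by (simp add: measure_measure_pmf_finite)
    also have "real (card Middle) \<le> K + 1"
    proof -
      have "card Middle \<le> card {j::nat. real N / 2 - K < real j \<and> real j \<le> real N / 2}"
        by (rule card_mono) (auto simp: Middle_def intro: finite_subset[of _ "{..N}"])
      then show ?thesis
        using card_nat_in_Ioc_le[OF K, of "real N / 2"] by linarith
    qed
    finally show ?thesis
      by (simp add: divide_right_mono)
  qed
  finally show ?thesis
    by simp
qed

section \<open>Majority votes with small drift\<close>

text \<open>Cauchy-Schwarz bounds a tail block by \<open>sqrt n\<close> times the root of a square-summable tail.\<close>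

lemma summable_sq_imp_sum_abs_smallo:
  fixes \<delta> :: "nat \<Rightarrow> real"
  assumes sq: "summable (\<lambda>i. \<delta> i ^ 2)"
  shows "(\<lambda>n. \<Sum>i<n. \<bar>\<delta> i\<bar>) \<in> o(\<lambda>n. sqrt (real n))"
proof (rule landau_o.smallI)
  fix c :: real
  assume c: "c > 0"
  have "\<exists>M. \<forall>n\<ge>M. norm (\<Sum>i. \<delta> (i + n) ^ 2) < (c / 2) ^ 2"
    using c sq by (intro suminf_exist_split) auto
  then obtain M where M: "norm (\<Sum>i. \<delta> (i + M) ^ 2) < (c / 2) ^ 2"
    by (meson order_refl)
  have tail_sq: "(\<Sum>i\<in>{M..<n}. \<delta> i ^ 2) \<le> (c / 2) ^ 2" for n
  proof -
    have "(\<Sum>i\<in>{M..<n}. \<delta> i ^ 2) = (\<Sum>i<n - M. \<delta> (i + M) ^ 2)"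
    proof (cases "M \<le> n")
      case True
      then show ?thesis
        using sum.shift_bounds_nat_ivl[of "\<lambda>i. \<delta> i ^ 2" 0 M "n - M"] by (simp add: lessThan_atLeast0)
    qed simp
    also have "\<dots> \<le> (\<Sum>i. \<delta> (i + M) ^ 2)"
      using summable_ignore_initial_segment[OF sq] by (intro sum_le_suminf) auto
    finally show ?thesis
      using M by simp
  qed
  have tail: "(\<Sum>i\<in>{M..<n}. \<bar>\<delta> i\<bar>) \<le> c / 2 * sqrt n" for n
  proof -
    have "(\<Sum>i\<in>{M..<n}. \<bar>\<delta> i\<bar> * 1)^2 \<le> (\<Sum>i\<in>{M..<n}. \<bar>\<delta> i\<bar>^2) * (\<Sum>i\<in>{M..<n}. 1^2)"
      by (rule Cauchy_Schwarz_ineq_sum)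
    also have "\<dots> \<le> (c / 2) ^ 2 * n"
      using tail_sq[of n] by (intro mult_mono) (auto intro: sum_nonneg)
    also have "\<dots> = (c / 2 * sqrt n)^2"
      by (simp add: power_mult_distrib power_divide)
    finally have "(\<Sum>i\<in>{M..<n}. \<bar>\<delta> i\<bar>)^2 \<le> (c / 2 * sqrt n)^2"
      by simp
    then show ?thesis
      by (rule power2_le_imp_le) (use c in simp)
  qed
  define A where "A = (\<Sum>i<M. \<bar>\<delta> i\<bar>)"
  have "\<forall>\<^sub>F n in sequentially. n \<ge> M + nat \<lceil>(2 * A / c)^2\<rceil>"
    by (rule eventually_ge_at_top)
  then show "\<forall>\<^sub>F n in sequentially. norm (\<Sum>i<n. \<bar>\<delta> i\<bar>) \<le> c * norm (sqrt (real n))"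
  proof eventually_elim
    case (elim n)
    have "(2 * A / c)^2 \<le> real n"
      using elim by linarith
    then have "sqrt ((2 * A / c)^2) \<le> sqrt n"
      by (rule real_sqrt_le_mono)
    then have "2 * A / c \<le> sqrt n"
      by (metis real_sqrt_abs abs_ge_self order_trans)
    then have head: "A \<le> c / 2 * sqrt n"
      using c by (simp add: field_simps)
    have "(\<Sum>i<n. \<bar>\<delta> i\<bar>) = A + (\<Sum>i\<in>{M..<n}. \<bar>\<delta> i\<bar>)"
      using elim sum.atLeastLessThan_concat[of 0 M n "\<lambda>i. \<bar>\<delta> i\<bar>"]
      by (simp add: A_def lessThan_atLeast0)
    then have "(\<Sum>i<n. \<bar>\<delta> i\<bar>) \<le> c * sqrt n"
      using head tail[of n] by simp
    then show ?case
      by (simp add: sum_nonneg)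
  qed
qed

lemma tail_prob_drift_le:
  assumes q: "\<And>i. q i \<in> {0..1}" and N: "N \<ge> 1" and c: "0 \<le> c" and L: "0 < L"
  shows "tail_prob q a N (real N / 2 - c)
    \<le> 1/2 + (c + L + 1) / sqrt N + 2 * (\<Sum>i<N. \<bar>q (a + i) - 1/2\<bar>) / L"
proof -
  define e where "e i = 2 * max (q i - 1/2) 0" for i
  have e: "e i \<in> {0..1}" and qe: "q i \<le> (1 + e i) / 2" for i
    using q[of i] by (auto simp: e_def max_def)
  have "tail_prob q a N (real N / 2 - c) \<le> tail_prob (\<lambda>_. 1/2) a N (real N / 2 - (c + L)) + tail_prob e a N L"
    using tail_prob_le_fair_plus_bonus[OF q e qe, where a=a and k=N and t="real N / 2 - c" and L=L] by (simp add: algebra_simps)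
  also have "tail_prob (\<lambda>_. 1/2) a N (real N / 2 - (c + L)) \<le> 1/2 + (c + L + 1) / sqrt N"
    unfolding tail_prob_fair_eq_binomial using N c L by (intro prob_binomial_half_gt_le) auto
  also have "tail_prob e a N L \<le> (\<Sum>i<N. e (a + i)) / L"
    using tail_prob_markov[OF e, where L=L and a=a and k=N] L by (simp add: field_simps)
  also have "(\<Sum>i<N. e (a + i)) \<le> 2 * (\<Sum>i<N. \<bar>q (a + i) - 1/2\<bar>)"
    unfolding sum_distrib_left by (intro sum_mono) (auto simp: e_def)
  finally show ?thesis
    using L by (simp add: divide_right_mono)
qed

lemma eventually_tail_prob_le_3_4:
  assumes q: "\<And>i. q i \<in> {0..1}"
    and drift: "(\<lambda>n. \<Sum>i<n. \<bar>q i - 1/2\<bar>) \<in> o(\<lambda>n. sqrt (real n))"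
  shows "\<forall>\<^sub>F n in sequentially. tail_prob q m (n - m) (real n / 2 - real m) \<le> 3/4"
proof -
  have "\<forall>\<^sub>F n in sequentially. norm (\<Sum>i<n. \<bar>q i - 1/2\<bar>) \<le> 1/512 * norm (sqrt (real n))"
    using drift by (rule landau_o.smallD) simp
  moreover have "\<forall>\<^sub>F n in sequentially. n \<ge> 2 * m + 1 + nat \<lceil>256 * (real m / 2 + 1)^2\<rceil>"
    by (rule eventually_ge_at_top)
  ultimately show ?thesis
  proof eventually_elim
    case (elim n)
    define N where "N = n - m"
    have N_eq: "real N = real n - real m"
      using elim unfolding N_def by (simp add: of_nat_diff)
    have N1: "N \<ge> 1"
      using elim unfolding N_def by simp
    have sqrt_N: "sqrt N > 0"
      using N1 by simp
    have "sqrt (256 * (real m / 2 + 1)^2) \<le> sqrt N"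
      using elim N_eq by (intro real_sqrt_le_mono) linarith
    then have small_m: "(real m / 2 + 1) / sqrt N \<le> 1/16"
      using sqrt_N by (simp add: real_sqrt_mult field_simps)
    have "sqrt n \<le> sqrt (4 * N)"
      using elim N_eq by (intro real_sqrt_le_mono) linarith
    then have sqrt_n: "sqrt n \<le> 2 * sqrt N"
      by (simp add: real_sqrt_mult)
    have "(\<Sum>i<N. \<bar>q (m + i) - 1/2\<bar>) \<le> (\<Sum>i<n. \<bar>q i - 1/2\<bar>)"
    proof -
      have "(\<Sum>i<N. \<bar>q (m + i) - 1/2\<bar>) = (\<Sum>i\<in>(+) m ` {..<N}. \<bar>q i - 1/2\<bar>)"
        by (simp add: sum.reindex)
      also have "\<dots> \<le> (\<Sum>i<n. \<bar>q i - 1/2\<bar>)"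
        by (intro sum_mono2) (auto simp: N_def)
      finally show ?thesis .
    qed
    also have "\<dots> \<le> sqrt N / 256"
      using elim(1) sqrt_n by (simp add: sum_nonneg)
    finally have "16 * (\<Sum>i<N. \<bar>q (m + i) - 1/2\<bar>) / sqrt N \<le> 1/16"
      using sqrt_N by (simp add: field_simps)
    then have drift_N: "2 * (\<Sum>i<N. \<bar>q (m + i) - 1/2\<bar>) / (sqrt N / 8) \<le> 1/16"
      by (simp add: field_simps)
    have "real n / 2 - real m = real N / 2 - real m / 2"
      using N_eq by (simp add: field_simps)
    then have "tail_prob q m N (real n / 2 - real m)
        \<le> 1/2 + (real m / 2 + sqrt N / 8 + 1) / sqrt N + 2 * (\<Sum>i<N. \<bar>q (m + i) - 1/2\<bar>) / (sqrt N / 8)"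
      using tail_prob_drift_le[OF q N1, where c="real m / 2" and L="sqrt N / 8" and a=m] sqrt_N by simp
    also have "(real m / 2 + sqrt N / 8 + 1) / sqrt N = (real m / 2 + 1) / sqrt N + 1/8"
      using sqrt_N by (simp add: field_simps)
    finally show ?case
      using small_m drift_N unfolding N_def by linarith
  qed
qed

section \<open>Means and the Hellinger integral\<close>

lemma
  assumes "sets \<nu>' = sets \<nu>"
  shows sets_sum_meas: "sets (sum_meas \<nu> \<nu>') = sets \<nu>"
    and space_sum_meas: "space (sum_meas \<nu> \<nu>') = space \<nu>"
    and emeasure_sum_meas: "A \<in> sets \<nu> \<Longrightarrow> emeasure (sum_meas \<nu> \<nu>') A = emeasure \<nu> A + emeasure \<nu>' A"
proof -
  have sa: "sigma_algebra (space \<nu>) (sets \<nu>)"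
    by (rule sets.sigma_algebra_axioms)
  show "sets (sum_meas \<nu> \<nu>') = sets \<nu>" "space (sum_meas \<nu> \<nu>') = space \<nu>"
    unfolding sum_meas_def using sigma_algebra.sets_measure_of_eq[OF sa] sigma_algebra.space_measure_of_eq[OF sa]
    by auto
  assume A: "A \<in> sets \<nu>"
  have "countably_additive (sets \<nu>) (\<lambda>A. emeasure \<nu> A + emeasure \<nu>' A)"
    unfolding countably_additive_def
  proof (intro allI impI)
    fix F :: "nat \<Rightarrow> _"
    assume F: "range F \<subseteq> sets \<nu>" "disjoint_family F"
    have "(\<Sum>i. emeasure \<nu> (F i) + emeasure \<nu>' (F i)) = (\<Sum>i. emeasure \<nu> (F i)) + (\<Sum>i. emeasure \<nu>' (F i))"
      by (rule suminf_add[symmetric]) auto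
    then show "(\<Sum>i. emeasure \<nu> (F i) + emeasure \<nu>' (F i)) = emeasure \<nu> (\<Union>i. F i) + emeasure \<nu>' (\<Union>i. F i)"
      using suminf_emeasure[OF F] suminf_emeasure[of F \<nu>'] F assms by simp
  qed
  then show "emeasure (sum_meas \<nu> \<nu>') A = emeasure \<nu> A + emeasure \<nu>' A"
    unfolding sum_meas_def by (intro emeasure_measure_of_sigma[OF sa _ _ A]) (auto simp: positive_def)
qed

lemma mult_le_weighted_sq:
  fixes a b l :: real
  assumes "l > 0"
  shows "a * b \<le> (l * a^2 + b^2 / l) / 2"
proof -
  have "0 \<le> (l * a - b)^2 / l"
    using assms by simp
  also have "(l * a - b)^2 / l = l * a^2 - 2 * a * b + b^2 / l"
    using assms by (simp add: power2_eq_square field_simps)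
  finally show ?thesis
    by simp
qed

text \<open>Factor \<open>f - g = (sqrt f - sqrt g) (sqrt f + sqrt g)\<close> and weigh the factors by \<open>l\<close>.\<close>

lemma abs_centered_mult_diff_le:
  fixes x f g l :: real
  assumes x: "x \<in> {0..1}" and fg: "0 \<le> f" "0 \<le> g" and l: "l > 0"
  shows "\<bar>(x - 1/2) * (f - g)\<bar> \<le> (l * (f + g - 2 * sqrt (f * g)) + (f + g + 2 * sqrt (f * g)) / l) / 4"
proof -
  have sq: "sqrt f ^ 2 = f" "sqrt g ^ 2 = g" "sqrt (f * g) = sqrt f * sqrt g"
    using fg by (auto simp: real_sqrt_mult)
  have "f - g = (sqrt f - sqrt g) * (sqrt f + sqrt g)"
    using sq by (simp add: power2_eq_square algebra_simps)
  then have "\<bar>f - g\<bar> = \<bar>sqrt f - sqrt g\<bar> * (sqrt f + sqrt g)"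
    using fg by (simp add: abs_mult)
  also have "\<dots> \<le> (l * \<bar>sqrt f - sqrt g\<bar>^2 + (sqrt f + sqrt g)^2 / l) / 2"
    by (rule mult_le_weighted_sq[OF l])
  also have "\<dots> = (l * (f + g - 2 * sqrt (f * g)) + (f + g + 2 * sqrt (f * g)) / l) / 2"
    using sq by (simp add: power2_eq_square algebra_simps)
  finally have "\<bar>f - g\<bar> \<le> \<dots>" .
  moreover have "\<bar>x - 1/2\<bar> \<le> 1/2"
    using x by (simp add: abs_if)
  ultimately have "\<bar>x - 1/2\<bar> * \<bar>f - g\<bar> \<le> 1/2 * ((l * (f + g - 2 * sqrt (f * g)) + (f + g + 2 * sqrt (f * g)) / l) / 2)"
    by (intro mult_mono) auto
  then show ?thesis
    by (simp add: abs_mult)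
qed

lemma sq_le_if_forall_pos_le:
  fixes d a :: real
  assumes a: "0 \<le> a" and le: "\<And>l. l > 0 \<Longrightarrow> \<bar>d\<bar> \<le> l * a + 1 / l"
  shows "d^2 \<le> 4 * a"
proof (cases "a = 0")
  case True
  have "\<bar>d\<bar> \<le> 0"
  proof (rule field_le_epsilon)
    fix e :: real
    assume "0 < e"
    then show "\<bar>d\<bar> \<le> 0 + e"
      using le[of "1 / e"] True by simp
  qed
  then show ?thesis
    using True by simp
next
  case False
  then have "a > 0"
    using a by simp
  moreover have "(1 / sqrt a) * a + 1 / (1 / sqrt a) = 2 * sqrt a"
    using \<open>a > 0\<close> by (simp add: real_div_sqrt)
  ultimately have "\<bar>d\<bar> \<le> 2 * sqrt a"
    using le[of "1 / sqrt a"] by simp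
  then have "\<bar>d\<bar>^2 \<le> (2 * sqrt a)^2"
    by (intro power_mono) auto
  then show ?thesis
    using \<open>a > 0\<close> by (simp add: power_mult_distrib)
qed

text \<open>The pointwise bound gives \<open>|d| \<le> l (1 - H) / 2 + 1 / l\<close> for the difference \<open>d\<close> of
  the means and every \<open>l > 0\<close>; the optimal \<open>l\<close> yields \<open>d\<^sup>2 \<le> 2 (1 - H)\<close>.\<close>

lemma mean_diff_sq_le_densities:
  fixes \<tau> :: "real measure" and f g :: "real \<Rightarrow> real"
  assumes "finite_measure \<tau>"
    and id_meas: "(\<lambda>x. x) \<in> borel_measurable \<tau>" and unit: "\<And>x. x \<in> space \<tau> \<Longrightarrow> x \<in> {0..1}"
    and f: "integrable \<tau> f" "(\<integral>x. f x \<partial>\<tau>) = 1" "\<And>x. 0 \<le> f x"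
    and g: "integrable \<tau> g" "(\<integral>x. g x \<partial>\<tau>) = 1" "\<And>x. 0 \<le> g x"
  shows "((\<integral>x. f x * x \<partial>\<tau>) - (\<integral>x. g x * x \<partial>\<tau>))^2 \<le> 2 * (1 - (\<integral>x. sqrt (f x * g x) \<partial>\<tau>))"
proof -
  interpret finite_measure \<tau>
    by fact
  have weighted_int: "integrable \<tau> (\<lambda>x. h x * x)" if h: "integrable \<tau> h" for h
    using h id_meas unit
    by (intro Bochner_Integration.integrable_bound[OF h]) (auto intro!: AE_I2 simp: abs_mult mult_left_le)
  define s where "s x = sqrt (f x * g x)" for x
  define H where "H = (\<integral>x. s x \<partial>\<tau>)"
  have amgm: "2 * s x \<le> f x + g x" for x
    using mult_le_weighted_sq[of 1 "sqrt (f x)" "sqrt (g x)"] f(3)[of x] g(3)[of x]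
    by (simp add: s_def real_sqrt_mult)
  have s_int: "integrable \<tau> s"
  proof (rule Bochner_Integration.integrable_bound[OF Bochner_Integration.integrable_add[OF f(1) g(1)]])
    show "s \<in> borel_measurable \<tau>"
      unfolding s_def using f(1) g(1) by measurable
    have "norm (s x) \<le> norm (f x + g x)" for x
      using amgm[of x] f(3)[of x] g(3)[of x] by (simp add: s_def)
    then show "AE x in \<tau>. norm (s x) \<le> norm (f x + g x)"
      by simp
  qed
  have "0 \<le> (\<integral>x. f x + g x - 2 * s x \<partial>\<tau>)"
    using amgm by (intro integral_nonneg_AE AE_I2) (simp add: algebra_simps)
  then have H_le_1: "H \<le> 1"
    using f g s_int by (simp add: H_def)
  define d where "d = (\<integral>x. f x * x \<partial>\<tau>) - (\<integral>x. g x * x \<partial>\<tau>)"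
  have centered_int: "integrable \<tau> (\<lambda>x. (x - 1/2) * (f x - g x))"
    using weighted_int[OF f(1)] weighted_int[OF g(1)] f(1) g(1) by (simp add: algebra_simps)
  have d_eq: "d = (\<integral>x. (x - 1/2) * (f x - g x) \<partial>\<tau>)"
    using weighted_int[OF f(1)] weighted_int[OF g(1)] f g unfolding d_def by (simp add: algebra_simps)
  have "\<bar>d\<bar> \<le> l * ((1 - H) / 2) + 1 / l" if l: "l > 0" for l
  proof -
    define B where "B x = (l/4 + 1/(4*l)) * f x + (l/4 + 1/(4*l)) * g x + (1/(2*l) - l/2) * s x" for x
    have "\<bar>d\<bar> \<le> (\<integral>x. \<bar>(x - 1/2) * (f x - g x)\<bar> \<partial>\<tau>)"
      unfolding d_eq using integral_norm_bound[of \<tau> "\<lambda>x. (x - 1/2) * (f x - g x)"] by simp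
    also have "\<dots> \<le> (\<integral>x. B x \<partial>\<tau>)"
    proof (rule integral_mono)
      fix x
      assume x: "x \<in> space \<tau>"
      have "\<bar>(x - 1/2) * (f x - g x)\<bar> \<le> (l * (f x + g x - 2 * s x) + (f x + g x + 2 * s x) / l) / 4"
        using abs_centered_mult_diff_le[OF unit[OF x] f(3)[of x] g(3)[of x] l] by (simp add: s_def)
      also have "\<dots> = B x"
        using l by (simp add: B_def field_simps)
      finally show "\<bar>(x - 1/2) * (f x - g x)\<bar> \<le> B x" .
    qed (use centered_int f(1) g(1) s_int in \<open>simp_all add: B_def\<close>)
    also have "(\<integral>x. B x \<partial>\<tau>) = l * ((1 - H) / 2) + (1 + H) / (2 * l)"
      unfolding B_def using f g s_int l by (simp add: H_def field_simps)
    also have "\<dots> \<le> l * ((1 - H) / 2) + 1 / l"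
      using H_le_1 l by (simp add: field_simps)
    finally show ?thesis .
  qed
  then have "d^2 \<le> 4 * ((1 - H) / 2)"
    using H_le_1 by (intro sq_le_if_forall_pos_le) auto
  then show ?thesis
    by (simp add: d_def H_def s_def)
qed

lemma mean_diff_sq_le_hellinger:
  assumes \<nu>: "prob_on_unit \<nu>" and \<nu>': "prob_on_unit \<nu>'"
  shows "((\<integral>x. x \<partial>\<nu>) - (\<integral>x. x \<partial>\<nu>'))^2 \<le> 2 * (1 - hellinger \<nu> \<nu>')"
proof -
  interpret N: prob_space \<nu>
    using \<nu> unfolding prob_on_unit_def by auto
  interpret N': prob_space \<nu>'
    using \<nu>' unfolding prob_on_unit_def by auto
  have sets: "sets \<nu> = sets (restrict_space borel {0..1})" "sets \<nu>' = sets \<nu>"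
    and space: "space \<nu> = {0..1}"
    using \<nu> \<nu>' unfolding prob_on_unit_def by auto
  define \<tau> where "\<tau> = sum_meas \<nu> \<nu>'"
  have sets_\<tau>: "sets \<tau> = sets \<nu>" and space_\<tau>: "space \<tau> = {0..1}"
    and emeasure_\<tau>: "\<And>A. A \<in> sets \<nu> \<Longrightarrow> emeasure \<tau> A = emeasure \<nu> A + emeasure \<nu>' A"
    unfolding \<tau>_def using sets_sum_meas space_sum_meas emeasure_sum_meas sets(2) space by auto
  have "emeasure \<tau> (space \<tau>) = emeasure \<nu> (space \<nu>) + emeasure \<nu>' (space \<nu>')"
    using emeasure_\<tau>[OF sets.top[of \<nu>]] space_\<tau> space sets_eq_imp_space_eq[OF sets(2)] by simp
  then interpret T: finite_measure \<tau>
    by (intro finite_measureI) (simp add: N.emeasure_space_1 N'.emeasure_space_1)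
  have ac: "absolutely_continuous \<tau> \<nu>" "absolutely_continuous \<tau> \<nu>'"
    unfolding absolutely_continuous_def
  proof safe
    fix A
    assume "A \<in> null_sets \<tau>"
    then have A: "A \<in> sets \<nu>" and "emeasure \<tau> A = 0"
      using sets_\<tau> by (auto simp: null_sets_def)
    then have "emeasure \<nu> A + emeasure \<nu>' A = 0"
      using emeasure_\<tau>[OF A] by simp
    then show "A \<in> null_sets \<nu>" "A \<in> null_sets \<nu>'"
      using A sets(2) by (simp_all add: null_sets_def)
  qed
  have "(\<lambda>x. x) \<in> borel_measurable (restrict_space borel {0..1::real})"
    by (rule measurable_restrict_space1) simp
  then have id_meas: "(\<lambda>x. x) \<in> borel_measurable \<tau>"
    and id_meas': "(\<lambda>x. x) \<in> borel_measurable \<nu>" "(\<lambda>x. x) \<in> borel_measurable \<nu>'"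
    unfolding measurable_cong_sets[OF sets_\<tau> refl] measurable_cong_sets[OF sets(2) refl]
      measurable_cong_sets[OF sets(1) refl] by simp_all
  have density: "integrable \<tau> (\<lambda>x. enn2real (RN_deriv \<tau> M x))"
      "(\<integral>x. enn2real (RN_deriv \<tau> M x) \<partial>\<tau>) = 1"
      "(\<integral>x. enn2real (RN_deriv \<tau> M x) * x \<partial>\<tau>) = (\<integral>x. x \<partial>M)"
    if "prob_space M" "absolutely_continuous \<tau> M" "sets M = sets \<tau>" "(\<lambda>x. x) \<in> borel_measurable M"
      "space M = {0..1}" for M
  proof -
    interpret M: prob_space M
      by fact
    have M: "sigma_finite_measure M"
      by unfold_locales
    have one: "(\<lambda>_. 1::real) \<in> borel_measurable \<tau>"
      by simp
    show "integrable \<tau> (\<lambda>x. enn2real (RN_deriv \<tau> M x))"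
      using T.RN_deriv_integrable[OF M that(2,3) one] by (simp add: M.integrable_const)
    show "(\<integral>x. enn2real (RN_deriv \<tau> M x) \<partial>\<tau>) = 1"
      using T.RN_deriv_integral[OF M that(2,3) one] by (simp add: M.prob_space)
    show "(\<integral>x. enn2real (RN_deriv \<tau> M x) * x \<partial>\<tau>) = (\<integral>x. x \<partial>M)"
      using T.RN_deriv_integral[OF M that(2,3) id_meas] by simp
  qed
  have space': "space \<nu>' = {0..1}"
    using sets_eq_imp_space_eq[OF sets(2)] space by simp
  have sets_eq: "sets \<nu> = sets \<tau>" "sets \<nu>' = sets \<tau>"
    using sets_\<tau> sets(2) by simp_all
  note f = density[OF N.prob_space_axioms ac(1) sets_eq(1) id_meas'(1) space]
  note g = density[OF N'.prob_space_axioms ac(2) sets_eq(2) id_meas'(2) space']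
  have "((\<integral>x. enn2real (RN_deriv \<tau> \<nu> x) * x \<partial>\<tau>) - (\<integral>x. enn2real (RN_deriv \<tau> \<nu>' x) * x \<partial>\<tau>))^2
      \<le> 2 * (1 - (\<integral>x. sqrt (enn2real (RN_deriv \<tau> \<nu> x) * enn2real (RN_deriv \<tau> \<nu>' x)) \<partial>\<tau>))"
    by (rule mean_diff_sq_le_densities[OF T.finite_measure_axioms id_meas _ f(1,2) _ g(1,2)])
      (simp_all add: space_\<tau>)
  then show ?thesis
    unfolding hellinger_def Let_def \<tau>_def[symmetric] f(3) g(3) .
qed

section \<open>Approximation by a generating algebra\<close>

lemma (in finite_measure) approx_by_generating_algebra:
  assumes G: "algebra (space M) G" and sets_eq: "sets M = sigma_sets (space M) G"
    and "A \<in> sets M" and "0 < e"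
  shows "\<exists>C\<in>G. measure M (sym_diff A C) < e"
proof -
  interpret G: algebra "space M" G
    by (fact G)
  have G_sets: "G \<subseteq> sets M"
    unfolding sets_eq by (rule sigma_sets_superset_generator)
  have "A \<in> sigma_sets (space M) G"
    using assms(3) unfolding sets_eq .
  then show ?thesis
    using \<open>0 < e\<close>
  proof (induction arbitrary: e)
    case (Basic A)
    then show ?case
      by (intro bexI[of _ A]) auto
  next
    case Empty
    then show ?case
      by (intro bexI[of _ "{}"]) auto
  next
    case (Compl A)
    then obtain C where C: "C \<in> G" "measure M (sym_diff A C) < e"
      by blast
    have "A \<subseteq> space M" "C \<subseteq> space M"
      using Compl.hyps C(1) G.space_closed sigma_sets_into_sp[OF G.space_closed] by auto
    then have "sym_diff (space M - A) (space M - C) = sym_diff A C"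
      by auto
    then show ?case
      using C by (intro bexI[of _ "space M - C"]) auto
  next
    case (Union A)
    have A: "A i \<in> sets M" for i
      using Union.hyps unfolding sets_eq by simp
    define B where "B K = (\<Union>i<K. A i)" for K
    have B: "B K \<in> sets M" "B K \<subseteq> (\<Union>i. A i)" for K
      using A unfolding B_def by auto
    have "incseq B"
      unfolding incseq_def B_def by (intro allI impI UN_mono) auto
    then have "(\<lambda>K. measure M (B K)) \<longlonglongrightarrow> measure M (\<Union>K. B K)"
      using B(1) by (intro finite_Lim_measure_incseq) auto
    moreover have "(\<Union>K. B K) = (\<Union>i. A i)"
      unfolding B_def by auto
    ultimately have lim: "(\<lambda>K. measure M (B K)) \<longlonglongrightarrow> measure M (\<Union>i. A i)"
      by simp
    have half: "e / 2 > 0"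
      using Union.prems by simp
    obtain K where "\<bar>measure M (B K) - measure M (\<Union>i. A i)\<bar> < e / 2"
      using LIMSEQ_D[OF lim half] by (auto simp: dist_real_def simp del: half_gt_zero_iff)
    then have K: "measure M (\<Union>i. A i) - measure M (B K) < e / 2"
      by linarith
    define e' where "e' = e / (2 * (real K + 1))"
    have "e' > 0"
      using Union.prems unfolding e'_def by simp
    then have "\<forall>i. \<exists>C\<in>G. measure M (sym_diff (A i) C) < e'"
      using Union.IH by blast
    then obtain C where C: "\<And>i. C i \<in> G" "\<And>i. measure M (sym_diff (A i) (C i)) < e'"
      by metis
    have C_sets: "C i \<in> sets M" for i
      using C(1) G_sets by auto
    have "sym_diff (\<Union>i. A i) (\<Union>i<K. C i) \<subseteq> ((\<Union>i. A i) - B K) \<union> (\<Union>i<K. sym_diff (A i) (C i))"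
      unfolding B_def by auto
    then have "measure M (sym_diff (\<Union>i. A i) (\<Union>i<K. C i))
        \<le> measure M ((\<Union>i. A i) - B K) + measure M (\<Union>i<K. sym_diff (A i) (C i))"
      using A B C_sets
      by (intro order_trans[OF finite_measure_mono measure_subadditive]) auto
    also have "measure M ((\<Union>i. A i) - B K) < e / 2"
      using K A B by (simp add: finite_measure_Diff)
    also have "measure M (\<Union>i<K. sym_diff (A i) (C i)) \<le> (\<Sum>i<K. measure M (sym_diff (A i) (C i)))"
      using A C_sets by (intro finite_measure_subadditive_finite) auto
    also have "\<dots> \<le> real K * e'"
      using C(2) sum_mono[of "{..<K}" "\<lambda>i. measure M (sym_diff (A i) (C i))" "\<lambda>_. e'"]
      by (simp add: less_imp_le)
    also have "real K * e' < e / 2"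
      using Union.prems unfolding e'_def by (simp add: field_simps)
    finally show ?case
      using C(1) by (intro bexI[of _ "\<Union>i<K. C i"] G.finite_UN) auto
  qed
qed

lemma (in finite_measure) measure_eq_0_if_Int_le_generating_algebra:
  assumes G: "algebra (space M) G" and sets_eq: "sets M = sigma_sets (space M) G"
    and A: "A \<in> sets M" and "c < 1"
    and le: "\<And>C. C \<in> G \<Longrightarrow> measure M (A \<inter> C) \<le> c * measure M C"
  shows "measure M A = 0"
proof -
  define c' where "c' = max c 0"
  have bound: "(1 - c') * measure M A \<le> 2 * e" if "0 < e" for e
  proof -
    obtain C where C: "C \<in> G" "measure M (sym_diff A C) < e"
      using approx_by_generating_algebra[OF G sets_eq A \<open>0 < e\<close>] by blast
    have C_sets: "C \<in> sets M"
      using C(1) sigma_sets_superset_generator sets_eq by blast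
    have "measure M A \<le> measure M (A \<inter> C) + measure M (sym_diff A C)"
      using A C_sets by (intro order_trans[OF finite_measure_mono measure_subadditive]) auto
    moreover have "measure M C \<le> measure M A + measure M (sym_diff A C)"
      using A C_sets by (intro order_trans[OF finite_measure_mono measure_subadditive]) auto
    moreover have "measure M (A \<inter> C) \<le> c' * measure M C"
      using le[OF C(1)] mult_right_mono[of c c' "measure M C"] unfolding c'_def by simp
    moreover have "0 \<le> c'" "c' < 1"
      using \<open>c < 1\<close> unfolding c'_def by auto
    ultimately have "measure M A \<le> c' * (measure M A + e) + e"
      using C(2) mult_left_mono[of "measure M C" "measure M A + e" c'] by linarith
    moreover have "c' * e \<le> e"
      using \<open>0 \<le> c'\<close> \<open>c' < 1\<close> \<open>0 < e\<close> by (intro mult_left_le_one_le) auto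
    ultimately show ?thesis
      by (simp add: algebra_simps)
  qed
  have "(1 - c') * measure M A \<le> 0"
  proof (rule field_le_epsilon)
    fix e :: real
    assume "0 < e"
    then show "(1 - c') * measure M A \<le> 0 + e"
      using bound[of "e / 2"] by simp
  qed
  moreover have "0 < 1 - c'"
    using \<open>c < 1\<close> unfolding c'_def by auto
  ultimately have "measure M A \<le> 0"
    by (simp add: mult_le_0_iff)
  then show ?thesis
    using measure_nonneg[of M A] by linarith
qed

section \<open>Independent random competences\<close>

lemma (in finite_measure) integrable_bounded:
  fixes f :: "'a \<Rightarrow> real"
  assumes "f \<in> borel_measurable M" and "\<And>x. x \<in> space M \<Longrightarrow> \<bar>f x\<bar> \<le> B"
  shows "integrable M f"
  using assms by (intro integrable_const_bound[where B=B]) (auto intro!: AE_I2)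

locale unit_product =
  fixes \<nu> :: "nat \<Rightarrow> real measure"
  assumes prob_on_unit: "\<And>n. prob_on_unit (\<nu> n)"
begin

lemma space_nu: "space (\<nu> n) = {0..1}"
  and sets_nu: "sets (\<nu> n) = sets (restrict_space borel {0..1})"
  using prob_on_unit[of n] unfolding prob_on_unit_def by auto

sublocale P: product_prob_space \<nu> UNIV
  using prob_on_unit
  by (simp add: product_prob_space_def product_prob_space_axioms_def product_sigma_finite_def
      prob_on_unit_def prob_space_imp_sigma_finite)

abbreviation \<mu> :: "(nat \<Rightarrow> real) measure" where
  "\<mu> \<equiv> PiM UNIV \<nu>"

definition mean :: "nat \<Rightarrow> real" where
  "mean i = (\<integral>x. x \<partial>\<nu> i)"

lemma borel_measurable_nu:
  assumes "f \<in> borel_measurable borel"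
  shows "f \<in> borel_measurable (\<nu> i)"
  using measurable_restrict_space1[OF assms] unfolding measurable_cong_sets[OF sets_nu refl] .

lemma integrable_nu:
  fixes f :: "real \<Rightarrow> real" and B :: real
  assumes "f \<in> borel_measurable borel" and "\<And>x. x \<in> {0..1} \<Longrightarrow> \<bar>f x\<bar> \<le> B"
  shows "integrable (\<nu> i) f"
proof (rule P.M.integrable_const_bound[where B=B])
  show "AE x in \<nu> i. norm (f x) \<le> B"
    using assms(2) by (intro AE_I2) (auto simp: space_nu)
  show "f \<in> borel_measurable (\<nu> i)"
    using assms(1) by (rule borel_measurable_nu)
qed

lemma mean_in_unit: "mean i \<in> {0..1}"
proof -
  have "0 \<le> (\<integral>x. x \<partial>\<nu> i)"
    by (intro integral_nonneg_AE AE_I2) (auto simp: space_nu)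
  moreover have "(\<integral>x. x \<partial>\<nu> i) \<le> (\<integral>x. 1 \<partial>\<nu> i)"
    by (intro integral_mono integrable_nu) (auto simp: space_nu)
  ultimately show ?thesis
    by (simp add: mean_def P.M.prob_space)
qed

lemma PiM_component_in_unit: "x \<in> space (PiM J \<nu>) \<Longrightarrow> i \<in> J \<Longrightarrow> x i \<in> {0..1}"
  by (auto simp: space_PiM space_nu)

lemma tail_prob_in_unit_PiM:
  "x \<in> space (PiM J \<nu>) \<Longrightarrow> {a..<a + k} \<subseteq> J \<Longrightarrow> tail_prob x a k t \<in> {0..1}"
  by (intro tail_prob_in_unit PiM_component_in_unit) auto

lemma space_mu: "space \<mu> = {p. \<forall>i. p i \<in> {0..1}}"
  by (auto simp: space_PiM space_nu PiE_def)

lemma measurable_tail_prob: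
  assumes "{a..<a + k} \<subseteq> J"
  shows "(\<lambda>x. tail_prob x a k t) \<in> borel_measurable (PiM J \<nu>)"
  using assms
proof (induction k arbitrary: t)
  case 0
  then show ?case by simp
next
  case (Suc k)
  have "(\<lambda>x. x (a + k)) \<in> borel_measurable (PiM J \<nu>)"
    using Suc.prems borel_measurable_nu[of "\<lambda>x. x"]
    by (intro measurable_compose[OF measurable_component_singleton]) auto
  moreover have "{a..<a + k} \<subseteq> J"
    using Suc.prems by auto
  then have "(\<lambda>x. tail_prob x a k s) \<in> borel_measurable (PiM J \<nu>)" for s
    by (rule Suc.IH)
  ultimately show ?case
    by (simp add: borel_measurable_add borel_measurable_times borel_measurable_diff)
qed

lemma integral_restrict_PiM:
  fixes g :: "(nat \<Rightarrow> real) \<Rightarrow> real"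
  assumes "finite J" and "g \<in> borel_measurable (PiM J \<nu>)"
  shows "(\<integral>x. g (restrict x J) \<partial>\<mu>) = (\<integral>y. g y \<partial>PiM J \<nu>)"
  using integral_distr[OF measurable_restrict_subset[of J UNIV \<nu>] assms(2)] P.distr_PiM_restrict_finite[of J] assms
  by simp

lemma integral_restrict_mult_component:
  fixes g :: "(nat \<Rightarrow> real) \<Rightarrow> real" and f :: "real \<Rightarrow> real"
  assumes g: "g \<in> borel_measurable (PiM {..<n} \<nu>)" "\<And>y. y \<in> space (PiM {..<n} \<nu>) \<Longrightarrow> \<bar>g y\<bar> \<le> B"
    and f: "f \<in> borel_measurable borel" "\<And>y. y \<in> {0..1} \<Longrightarrow> \<bar>f y\<bar> \<le> B'"
  shows "(\<integral>x. g (restrict x {..<n}) * f (x n) \<partial>\<mu>) = (\<integral>x. g (restrict x {..<n}) \<partial>\<mu>) * (\<integral>y. f y \<partial>\<nu> n)"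
proof -
  let ?I = "insert n {..<n}"
  define h where "h y = g (restrict y {..<n}) * f (y n)" for y
  have restrict_space: "restrict y {..<n} \<in> space (PiM {..<n} \<nu>)" if "y \<in> space (PiM ?I \<nu>)" for y
    using measurable_space[OF measurable_restrict_subset[of "{..<n}" ?I \<nu>] that] by auto
  have h_meas: "h \<in> borel_measurable (PiM ?I \<nu>)"
    unfolding h_def using g(1) borel_measurable_nu[OF f(1)]
    by (intro borel_measurable_times measurable_compose[OF measurable_restrict_subset g(1)]
        measurable_compose[OF measurable_component_singleton]) auto
  interpret F: finite_product_prob_space \<nu> ?I
    by unfold_locales auto
  have h_int: "integrable (PiM ?I \<nu>) h"
  proof (rule F.integrable_bounded[OF h_meas])
    fix y
    assume y: "y \<in> space (PiM ?I \<nu>)"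
    then have "y n \<in> {0..1}"
      by (rule PiM_component_in_unit) simp
    then have "\<bar>f (y n)\<bar> \<le> \<bar>B'\<bar>"
      using f(2) abs_ge_self[of B'] by (meson order_trans)
    moreover have "\<bar>g (restrict y {..<n})\<bar> \<le> \<bar>B\<bar>"
      using g(2)[OF restrict_space[OF y]] abs_ge_self[of B] by linarith
    ultimately show "\<bar>h y\<bar> \<le> \<bar>B\<bar> * \<bar>B'\<bar>"
      unfolding h_def abs_mult by (intro mult_mono) auto
  qed
  have "(\<integral>x. g (restrict x {..<n}) * f (x n) \<partial>\<mu>) = (\<integral>x. h (restrict x ?I) \<partial>\<mu>)"
    unfolding h_def by simp
  also have "\<dots> = (\<integral>y. h y \<partial>PiM ?I \<nu>)"
    using h_meas by (intro integral_restrict_PiM) auto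
  also have "\<dots> = (\<integral>x. (\<integral>y. h (x(n := y)) \<partial>\<nu> n) \<partial>PiM {..<n} \<nu>)"
    by (rule P.product_integral_insert[OF _ _ h_int]) auto
  also have "\<dots> = (\<integral>x. g x * (\<integral>y. f y \<partial>\<nu> n) \<partial>PiM {..<n} \<nu>)"
  proof (rule Bochner_Integration.integral_cong[OF refl])
    fix x
    assume "x \<in> space (PiM {..<n} \<nu>)"
    then have "restrict (x(n := y)) {..<n} = x" for y
      by (auto simp: space_PiM PiE_def extensional_def restrict_def fun_eq_iff)
    then show "(\<integral>y. h (x(n := y)) \<partial>\<nu> n) = g x * (\<integral>y. f y \<partial>\<nu> n)"
      unfolding h_def by simp
  qed
  also have "\<dots> = (\<integral>x. g (restrict x {..<n}) \<partial>\<mu>) * (\<integral>y. f y \<partial>\<nu> n)"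
    using g(1) by (simp add: integral_restrict_PiM)
  finally show ?thesis .
qed

text \<open>Since \<open>tail_prob\<close> is affine in each competence, averaging over independent competences
  amounts to plugging in their means.\<close>

lemma integral_restrict_mult_tail_prob:
  fixes g :: "(nat \<Rightarrow> real) \<Rightarrow> real"
  assumes g: "g \<in> borel_measurable (PiM {..<m} \<nu>)" "\<And>y. y \<in> space (PiM {..<m} \<nu>) \<Longrightarrow> \<bar>g y\<bar> \<le> B"
  shows "(\<integral>x. g (restrict x {..<m}) * tail_prob x m k t \<partial>\<mu>)
    = (\<integral>x. g (restrict x {..<m}) \<partial>\<mu>) * tail_prob mean m k t"
proof (induction k arbitrary: t)
  case 0
  then show ?case by simp
next
  case (Suc k)
  let ?g = "\<lambda>x. g (restrict x {..<m})" and ?n = "m + k"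
  define h where "h s y = g (restrict y {..<m}) * tail_prob y m k s" for s y
  have h_restrict: "h s (restrict x {..<?n}) = ?g x * tail_prob x m k s" for s x
  proof -
    have "restrict (restrict x {..<?n}) {..<m} = restrict x {..<m}"
      by (auto simp: restrict_def)
    moreover have "tail_prob (restrict x {..<?n}) m k s = tail_prob x m k s"
      by (rule tail_prob_cong) auto
    ultimately show ?thesis
      unfolding h_def by simp
  qed
  have h_meas: "h s \<in> borel_measurable (PiM {..<?n} \<nu>)" for s
    unfolding h_def
    using measurable_compose[OF measurable_restrict_subset[of "{..<m}" "{..<?n}" \<nu>] g(1)]
    by (intro borel_measurable_times measurable_tail_prob) auto
  have h_bound: "\<bar>h s y\<bar> \<le> \<bar>B\<bar>" if y: "y \<in> space (PiM {..<?n} \<nu>)" for s y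
  proof -
    have "restrict y {..<m} \<in> space (PiM {..<m} \<nu>)"
      using measurable_space[OF measurable_restrict_subset[of "{..<m}" "{..<?n}" \<nu>] y] by auto
    moreover have "tail_prob y m k s \<in> {0..1}"
      using y by (rule tail_prob_in_unit_PiM) auto
    ultimately have "\<bar>g (restrict y {..<m})\<bar> * \<bar>tail_prob y m k s\<bar> \<le> \<bar>B\<bar> * 1"
      using g(2) by (intro mult_mono) force+
    then show ?thesis
      by (simp add: h_def abs_mult)
  qed
  have integrable_h: "integrable \<mu> (\<lambda>x. h s (restrict x {..<?n}) * f (x ?n))"
    if "f \<in> borel_measurable borel" "\<And>y. y \<in> {0..1} \<Longrightarrow> \<bar>f y\<bar> \<le> 1" for s f
  proof (rule P.P.integrable_bounded)
    show "(\<lambda>x. h s (restrict x {..<?n}) * f (x ?n)) \<in> borel_measurable \<mu>"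
      using measurable_compose[OF measurable_restrict_subset h_meas] borel_measurable_nu[OF that(1)]
      by (intro borel_measurable_times measurable_compose[OF measurable_component_singleton]) auto
    fix x
    assume x: "x \<in> space \<mu>"
    have "restrict x {..<?n} \<in> space (PiM {..<?n} \<nu>)"
      using measurable_space[OF measurable_restrict_subset[of "{..<?n}" UNIV \<nu>] x] by auto
    then show "\<bar>h s (restrict x {..<?n}) * f (x ?n)\<bar> \<le> \<bar>B\<bar> * 1"
      unfolding abs_mult using h_bound that(2) PiM_component_in_unit[OF x]
      by (intro mult_mono) auto
  qed
  have mean_1: "(\<integral>y. 1 - y \<partial>\<nu> ?n) = 1 - mean ?n"
    using integrable_nu[of "\<lambda>y. y" 1 ?n] by (simp add: mean_def P.M.prob_space)
  have "(\<integral>x. ?g x * tail_prob x m (Suc k) t \<partial>\<mu>)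
      = (\<integral>x. h (t - 1) (restrict x {..<?n}) * x ?n + h t (restrict x {..<?n}) * (1 - x ?n) \<partial>\<mu>)"
    unfolding h_restrict by (simp add: algebra_simps)
  also have "\<dots> = (\<integral>x. h (t - 1) (restrict x {..<?n}) * x ?n \<partial>\<mu>) + (\<integral>x. h t (restrict x {..<?n}) * (1 - x ?n) \<partial>\<mu>)"
    using integrable_h[of "\<lambda>y. y"] integrable_h[of "\<lambda>y. 1 - y"] by (intro Bochner_Integration.integral_add) auto
  also have "\<dots> = (\<integral>x. h (t - 1) (restrict x {..<?n}) \<partial>\<mu>) * mean ?n
      + (\<integral>x. h t (restrict x {..<?n}) \<partial>\<mu>) * (1 - mean ?n)"
    using integral_restrict_mult_component[OF h_meas h_bound, of "\<lambda>y. y" 1]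
      integral_restrict_mult_component[OF h_meas h_bound, of "\<lambda>y. 1 - y" 1]
    by (simp add: mean_def mean_1)
  also have "\<dots> = (\<integral>x. ?g x \<partial>\<mu>) * tail_prob mean m (Suc k) t"
    unfolding h_restrict Suc.IH by (simp add: algebra_simps)
  finally show ?case .
qed


lemma maj_prob_eq_tail_prob_mu: "x \<in> space \<mu> \<Longrightarrow> maj_prob x n = tail_prob x 0 n (real n / 2)"
  by (intro maj_prob_eq_tail_prob) (auto simp: space_mu)

lemma measurable_maj_prob [measurable]: "(\<lambda>x. maj_prob x n) \<in> borel_measurable \<mu>"
  using measurable_tail_prob[of 0 n UNIV "real n / 2"]
  by (subst measurable_cong[OF maj_prob_eq_tail_prob_mu]) auto

lemma maj_prob_in_unit: "x \<in> space \<mu> \<Longrightarrow> maj_prob x n \<in> {0..1}"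
  unfolding maj_prob_eq_tail_prob_mu by (intro tail_prob_in_unit) (auto simp: space_mu)

lemma integrable_indicator_mult_maj_prob:
  assumes "B \<in> sets \<mu>"
  shows "integrable \<mu> (\<lambda>x. indicator B x * maj_prob x n)"
proof (rule P.P.integrable_bounded[where B=1])
  show "(\<lambda>x. indicator B x * maj_prob x n) \<in> borel_measurable \<mu>"
    using assms by simp
  show "\<bar>indicator B x * maj_prob x n\<bar> \<le> 1" if "x \<in> space \<mu>" for x
    using maj_prob_in_unit[OF that, of n] by (auto simp: indicator_def)
qed

lemma indicator_prod_emb:
  "x \<in> space \<mu> \<Longrightarrow> indicator (prod_emb UNIV \<nu> J X) x = indicator X (restrict x J)"
  by (simp add: prod_emb_def space_PiM indicator_def)

lemma integral_cylinder_mult_maj_prob_le: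
  assumes X: "X \<in> sets (PiM {..<m} \<nu>)" and "m \<le> n"
  defines "C \<equiv> prod_emb UNIV \<nu> {..<m} X"
  shows "(\<integral>x. indicator C x * maj_prob x n \<partial>\<mu>) \<le> measure \<mu> C * tail_prob mean m (n - m) (real n / 2 - real m)"
proof -
  let ?h = "\<lambda>x. indicator X (restrict x {..<m}) :: real"
  have C: "C \<in> sets \<mu>"
    unfolding C_def using X by simp
  have h_meas: "?h \<in> borel_measurable \<mu>"
    using X by (intro measurable_compose[OF measurable_restrict_subset borel_measurable_indicator]) auto
  have "(\<integral>x. indicator C x * maj_prob x n \<partial>\<mu>) \<le> (\<integral>x. ?h x * tail_prob x m (n - m) (real n / 2 - real m) \<partial>\<mu>)"
  proof (rule integral_mono)
    show "integrable \<mu> (\<lambda>x. indicator C x * maj_prob x n)"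
      using C by (rule integrable_indicator_mult_maj_prob)
    show "integrable \<mu> (\<lambda>x. ?h x * tail_prob x m (n - m) (real n / 2 - real m))"
    proof (rule P.P.integrable_bounded[where B=1])
      show "(\<lambda>x. ?h x * tail_prob x m (n - m) (real n / 2 - real m)) \<in> borel_measurable \<mu>"
        using h_meas measurable_tail_prob[of m "n - m" UNIV] by simp
      show "\<bar>?h x * tail_prob x m (n - m) (real n / 2 - real m)\<bar> \<le> 1" if "x \<in> space \<mu>" for x
        using tail_prob_in_unit_PiM[OF that, of m "n - m"] by (auto simp: indicator_def)
    qed
    fix x
    assume x: "x \<in> space \<mu>"
    have "maj_prob x n = tail_prob x 0 (m + (n - m)) (real n / 2)"
      using maj_prob_eq_tail_prob_mu[OF x] \<open>m \<le> n\<close> by simp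
    also have "\<dots> \<le> tail_prob x m (n - m) (real n / 2 - real m)"
      using x by (intro tail_prob_drop_prefix) (auto simp: space_mu)
    finally show "indicator C x * maj_prob x n \<le> ?h x * tail_prob x m (n - m) (real n / 2 - real m)"
      using x unfolding C_def indicator_prod_emb[OF x] by (intro mult_left_mono) auto
  qed
  also have "\<dots> = (\<integral>x. ?h x \<partial>\<mu>) * tail_prob mean m (n - m) (real n / 2 - real m)"
    using X by (intro integral_restrict_mult_tail_prob[where B=1]) auto
  also have "(\<integral>x. ?h x \<partial>\<mu>) = measure \<mu> C"
    using C by (simp add: C_def indicator_prod_emb[symmetric] cong: Bochner_Integration.integral_cong)
  finally show ?thesis .
qed

lemma CJP_set_eq:
  "CJP_set = {x \<in> space \<mu>. Cauchy (\<lambda>k. maj_prob x (2 * k + 1)) \<and> lim (\<lambda>k. maj_prob x (2 * k + 1)) = 1}"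
  unfolding CJP_set_def space_mu
  by (auto simp: Cauchy_convergent_iff convergent_LIMSEQ_iff limI intro: convergentI)

lemma sets_CJP_set: "CJP_set \<in> sets \<mu>"
proof -
  have [measurable]: "(\<lambda>x. lim (\<lambda>k. maj_prob x (2 * k + 1))) \<in> borel_measurable \<mu>"
    by (rule borel_measurable_lim_metric) simp
  have "{x \<in> space \<mu>. lim (\<lambda>k. maj_prob x (2 * k + 1)) = 1} \<in> sets \<mu>"
    by measurable
  moreover have "{x \<in> space \<mu>. Cauchy (\<lambda>k. maj_prob x (2 * k + 1))} \<in> sets \<mu>"
    by (rule sets_Collect_Cauchy) simp
  ultimately show ?thesis
    unfolding CJP_set_eq by (rule sets.sets_Collect_conj)
qed

text \<open>Conditioning on a cylinder fixes finitely many competences; the remaining votes are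
  majority votes with drift \<open>o(sqrt n)\<close>, so they succeed with probability at most \<open>3/4\<close>.\<close>

lemma measure_CJP_set_Int_cylinder_le:
  assumes drift: "(\<lambda>n. \<Sum>i<n. \<bar>mean i - 1/2\<bar>) \<in> o(\<lambda>n. sqrt (real n))"
    and X: "X \<in> sets (PiM {..<m} \<nu>)"
  defines "C \<equiv> prod_emb UNIV \<nu> {..<m} X"
  shows "measure \<mu> (CJP_set \<inter> C) \<le> 3/4 * measure \<mu> C"
proof -
  let ?A = "CJP_set \<inter> C"
  have A: "?A \<in> sets \<mu>"
    unfolding C_def using X sets_CJP_set by (intro sets.Int) auto
  define s where "s k x = indicator ?A x * maj_prob x (2 * k + 1)" for k x
  have "(\<lambda>k. \<integral>x. s k x \<partial>\<mu>) \<longlonglongrightarrow> (\<integral>x. indicator ?A x \<partial>\<mu>)"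
  proof (rule integral_dominated_convergence[where w="\<lambda>_. 1"])
    show "AE x in \<mu>. (\<lambda>k. s k x) \<longlonglongrightarrow> indicator ?A x"
    proof (rule AE_I2)
      fix x
      show "(\<lambda>k. s k x) \<longlonglongrightarrow> indicator ?A x"
      proof (cases "x \<in> ?A")
        case True
        then have "(\<lambda>k. maj_prob x (2 * k + 1)) \<longlonglongrightarrow> 1"
          unfolding CJP_set_def by auto
        then show ?thesis
          using True by (simp add: s_def)
      qed (simp add: s_def)
    qed
    show "AE x in \<mu>. norm (s k x) \<le> 1" for k
      using maj_prob_in_unit by (intro AE_I2) (auto simp: s_def indicator_def)
  qed (use A in \<open>auto simp: s_def\<close>)
  moreover have "\<forall>\<^sub>F k in sequentially. (\<integral>x. s k x \<partial>\<mu>) \<le> 3/4 * measure \<mu> C"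
  proof -
    obtain N where N: "\<And>n. n \<ge> N \<Longrightarrow> tail_prob mean m (n - m) (real n / 2 - real m) \<le> 3/4"
      using eventually_tail_prob_le_3_4[OF mean_in_unit drift, of m]
      unfolding eventually_sequentially by blast
    have "\<forall>\<^sub>F k in sequentially. k \<ge> N + m"
      by (rule eventually_ge_at_top)
    then show ?thesis
    proof eventually_elim
      case (elim k)
      have "(\<integral>x. s k x \<partial>\<mu>) \<le> (\<integral>x. indicator C x * maj_prob x (2 * k + 1) \<partial>\<mu>)"
      proof (rule integral_mono)
        show "integrable \<mu> (s k)" "integrable \<mu> (\<lambda>x. indicator C x * maj_prob x (2 * k + 1))"
          using A X unfolding s_def C_def by (auto intro: integrable_indicator_mult_maj_prob)
        show "s k x \<le> indicator C x * maj_prob x (2 * k + 1)" if "x \<in> space \<mu>" for x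
          using maj_prob_in_unit[OF that] by (auto simp: s_def indicator_def)
      qed
      also have "\<dots> \<le> measure \<mu> C * tail_prob mean m (2 * k + 1 - m) (real (2 * k + 1) / 2 - real m)"
        unfolding C_def using X elim by (intro integral_cylinder_mult_maj_prob_le) auto
      also have "\<dots> \<le> measure \<mu> C * (3/4)"
        using N[of "2 * k + 1"] elim by (intro mult_left_mono) auto
      finally show ?case
        by simp
    qed
  qed
  ultimately have "(\<integral>x. indicator ?A x \<partial>\<mu>) \<le> 3/4 * measure \<mu> C"
    by (rule tendsto_upperbound) simp
  then show ?thesis
    using A by simp
qed

lemma measure_CJP_set_eq_0:
  assumes drift: "(\<lambda>n. \<Sum>i<n. \<bar>mean i - 1/2\<bar>) \<in> o(\<lambda>n. sqrt (real n))"
  shows "measure \<mu> CJP_set = 0"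
proof (rule P.P.measure_eq_0_if_Int_le_generating_algebra[OF P.algebra_generator P.sets_PiM_generator sets_CJP_set])
  fix C
  assume "C \<in> P.generator"
  then obtain J X where C: "C = prod_emb UNIV \<nu> J X" and J: "finite J" and X: "X \<in> sets (PiM J \<nu>)"
    by (auto elim: P.generator.cases)
  obtain m where "J \<subseteq> {..<m}"
    using finite_nat_bounded[OF J] by blast
  then have "C = prod_emb UNIV \<nu> {..<m} (prod_emb {..<m} \<nu> J X)"
    and "prod_emb {..<m} \<nu> J X \<in> sets (PiM {..<m} \<nu>)"
    using X unfolding C by simp_all
  then show "measure \<mu> (CJP_set \<inter> C) \<le> 3/4 * measure \<mu> C"
    using measure_CJP_set_Int_cylinder_le[OF drift] by simp
qed simp

end

lemma summable_mean_dev_sq_if_centered: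
  assumes "centered \<nu>"
  shows "summable (\<lambda>n. ((\<integral>x. x \<partial>\<nu> n) - 1/2)^2)"
proof -
  from assms obtain \<nu>0 d where \<nu>: "\<And>n. prob_on_unit (\<nu> n)" and \<nu>0: "prob_on_unit \<nu>0"
    and mean0: "(\<integral>x. x \<partial>\<nu>0) = 1/2" and "d \<in> class_D" and sum_d: "(\<Sum>n. d (\<nu> n) \<nu>0) < \<top>"
    unfolding centered_def by blast
  then obtain C
    where C: "\<And>\<nu> \<nu>'. prob_on_unit \<nu> \<Longrightarrow> prob_on_unit \<nu>' \<Longrightarrow> ennreal (1 - hellinger \<nu> \<nu>') \<le> ennreal C * d \<nu> \<nu>'"
    unfolding class_D_def by blast
  have "ennreal (((\<integral>x. x \<partial>\<nu> n) - 1/2)^2) \<le> ennreal 2 * (ennreal C * d (\<nu> n) \<nu>0)" for n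
  proof -
    have le: "((\<integral>x. x \<partial>\<nu> n) - 1/2)^2 \<le> 2 * (1 - hellinger (\<nu> n) \<nu>0)"
      using mean_diff_sq_le_hellinger[OF \<nu> \<nu>0] unfolding mean0 .
    then have "0 \<le> 2 * (1 - hellinger (\<nu> n) \<nu>0)"
      by (rule order_trans[OF zero_le_power2])
    have "ennreal (((\<integral>x. x \<partial>\<nu> n) - 1/2)^2) \<le> ennreal (2 * (1 - hellinger (\<nu> n) \<nu>0))"
      using le by (rule ennreal_leI)
    also have "\<dots> = ennreal 2 * ennreal (1 - hellinger (\<nu> n) \<nu>0)"
      using \<open>0 \<le> 2 * (1 - hellinger (\<nu> n) \<nu>0)\<close> by (intro ennreal_mult) simp_all
    also have "\<dots> \<le> ennreal 2 * (ennreal C * d (\<nu> n) \<nu>0)"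
      using C[OF \<nu> \<nu>0] by (rule mult_left_mono) simp
    finally show ?thesis .
  qed
  then have "(\<Sum>n. ennreal (((\<integral>x. x \<partial>\<nu> n) - 1/2)^2)) \<le> (\<Sum>n. ennreal 2 * ennreal C * d (\<nu> n) \<nu>0)"
    by (intro suminf_le) (auto simp: mult.assoc)
  also have "\<dots> = ennreal 2 * ennreal C * (\<Sum>n. d (\<nu> n) \<nu>0)"
    by (rule ennreal_suminf_cmult)
  also have "\<dots> < \<top>"
    using sum_d by (simp add: ennreal_mult_less_top)
  finally have "(\<Sum>n. ennreal (((\<integral>x. x \<partial>\<nu> n) - 1/2)^2)) \<noteq> \<top>"
    by (rule less_imp_neq)
  then show ?thesis
    by (rule summable_suminf_not_top[rotated]) (rule zero_le_power2)
qed

theorem theorem1: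
  fixes \<nu> :: "nat \<Rightarrow> real measure"
  assumes "centered \<nu>"
  shows "CJP_set \<in> sets (PiM UNIV \<nu>) \<and> emeasure (PiM UNIV \<nu>) CJP_set = 0"
proof -
  interpret unit_product \<nu>
    using assms unfolding centered_def by unfold_locales blast
  have "(\<lambda>n. \<Sum>i<n. \<bar>mean i - 1/2\<bar>) \<in> o(\<lambda>n. sqrt (real n))"
    using summable_sq_imp_sum_abs_smallo[OF summable_mean_dev_sq_if_centered[OF assms]]
    unfolding mean_def .
  then have "measure \<mu> CJP_set = 0"
    by (rule measure_CJP_set_eq_0)
  then show ?thesis
    using sets_CJP_set by (simp add: P.P.emeasure_eq_measure)
qed

end
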